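(* Let $X$ be an amoebot structure with $n$ amoebots forming a line (a straight segment of consecutive grid nodes along one axis), and let $S\subseteq X$ be non-empty, each amoebot knowing whether it belongs to $S$. There is an algorithm in the reconfigurable circuit model (the line algorithm) that computes an $S$-shortest path forest within $O(\log n)$ rounds.
   Context: Geometric amoebot model with reconfigurable circuits: $G_\Delta$ is the infinite regular triangular grid graph; an amoebot structure is a finite set $X$ of grid nodes, each occupied by an anonymous constant-memory amoebot, with $G_X=(X,E_X)$ the induced (connected) subgraph. Each edge of $G_X$ is replaced by a constant number of external links with pins at both endpoints (labeling agreed by neighbors); each amoebot partitions its pins into partition sets; circuits are connected components of the graph on all partition sets joined by external links. In synchronous rounds every amoebot may update its state, change its partition and beep on partition sets; beeps are received at the start of the next round by all partition sets of the same circuit (without sender identity or count). Amoebots share compass orientation and chirality. An $S$-shortest path forest is a family of rooted trees $T_s=(V_s,E_s)$, $s\in S$, $V_s\subseteq X$, $E_s\subseteq E_X$, rooted at $s$, with pairwise disjoint $V_s$ covering $X$, such that for every $u\in V_s$ the tree path from $s$ to $u$ is a shortest path in $G_X$ and $s$ is a closest amoebot of $S$ to $u$; computing it means every amoebot not in $S$ knows its parent. *)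

theory Defs
  imports Complex_Main
begin

text \<open>Grid nodes of the infinite regular triangular grid in axial coordinates.\<close>
type_synonym node = "int \<times> int"

text \<open>The six compass directions (shared by all amoebots).\<close>
datatype dir = E | NE | NW | W | SW | SE

fun dvec :: "dir \<Rightarrow> int \<times> int" where
  "dvec E = (1, 0)" | "dvec NE = (0, 1)" | "dvec NW = (-1, 1)"
| "dvec W = (-1, 0)" | "dvec SW = (0, -1)" | "dvec SE = (1, -1)"

fun opp :: "dir \<Rightarrow> dir" where
  "opp E = W" | "opp NE = SW" | "opp NW = SE"
| "opp W = E" | "opp SW = NE" | "opp SE = NW"

definition mv :: "node \<Rightarrow> dir \<Rightarrow> node" where
  "mv u d = (fst u + fst (dvec d), snd u + snd (dvec d))"

definition grid_adj :: "node \<Rightarrow> node \<Rightarrow> bool" where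
  "grid_adj u v \<longleftrightarrow> (\<exists>d. v = mv u d)"

definition walk :: "node set \<Rightarrow> node list \<Rightarrow> bool" where
  "walk X xs \<longleftrightarrow> xs \<noteq> [] \<and> set xs \<subseteq> X \<and>
     (\<forall>i. Suc i < length xs \<longrightarrow> grid_adj (xs ! i) (xs ! Suc i))"

definition amoebot_structure :: "node set \<Rightarrow> bool" where
  "amoebot_structure X \<longleftrightarrow> finite X \<and> X \<noteq> {} \<and>
     (\<forall>u\<in>X. \<forall>v\<in>X. \<exists>xs. walk X xs \<and> hd xs = u \<and> last xs = v)"

definition edgesX :: "node set \<Rightarrow> node set set" where
  "edgesX X = {{u, v} | u v. u \<in> X \<and> v \<in> X \<and> grid_adj u v}"

definition gdist :: "node set \<Rightarrow> node \<Rightarrow> node \<Rightarrow> nat" where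
  "gdist X u v = (LEAST k. \<exists>xs. walk X xs \<and> hd xs = u \<and> last xs = v \<and> length xs = Suc k)"

definition is_line :: "node set \<Rightarrow> nat \<Rightarrow> bool" where
  "is_line X n \<longleftrightarrow> n \<ge> 1 \<and> (\<exists>p d. X = {(fst p + int k * fst (dvec d), snd p + int k * snd (dvec d)) | k. k < n})"

definition epath :: "node set set \<Rightarrow> node list \<Rightarrow> bool" where
  "epath F xs \<longleftrightarrow> xs \<noteq> [] \<and> (\<forall>i. Suc i < length xs \<longrightarrow> {xs ! i, xs ! Suc i} \<in> F)"

definition tpath :: "node set set \<Rightarrow> node \<Rightarrow> node \<Rightarrow> node list \<Rightarrow> bool" where
  "tpath F u v xs \<longleftrightarrow> epath F xs \<and> distinct xs \<and> hd xs = u \<and> last xs = v"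

definition is_tree :: "node set \<Rightarrow> node set set \<Rightarrow> bool" where
  "is_tree V F \<longleftrightarrow> V \<noteq> {} \<and> (\<forall>e\<in>F. \<exists>a b. e = {a, b} \<and> a \<noteq> b \<and> a \<in> V \<and> b \<in> V) \<and>
     (\<forall>u\<in>V. \<forall>v\<in>V. \<exists>!xs. tpath F u v xs)"

definition spf :: "node set \<Rightarrow> node set \<Rightarrow> (node \<Rightarrow> node set) \<Rightarrow> (node \<Rightarrow> node set set) \<Rightarrow> bool" where
  "spf X S V F \<longleftrightarrow>
     (\<forall>s\<in>S. is_tree (V s) (F s) \<and> s \<in> V s \<and> V s \<subseteq> X \<and> F s \<subseteq> edgesX X) \<and>
     (\<forall>s\<in>S. \<forall>s'\<in>S. s \<noteq> s' \<longrightarrow> V s \<inter> V s' = {}) \<and>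
     (\<Union>s\<in>S. V s) = X \<and>
     (\<forall>s\<in>S. \<forall>u\<in>V s. \<forall>xs. tpath (F s) s u xs \<longrightarrow> length xs = Suc (gdist X s u)) \<and>
     (\<forall>s\<in>S. \<forall>u\<in>V s. \<forall>s'\<in>S. gdist X s u \<le> gdist X s' u)"

text \<open>The parent pointers (given as compass directions) of all amoebots not in S
  are the parents in some S-shortest path forest (rooted at the elements of S).\<close>
definition computes_spf :: "node set \<Rightarrow> node set \<Rightarrow> (node \<Rightarrow> dir option) \<Rightarrow> bool" where
  "computes_spf X S par \<longleftrightarrow> (\<exists>V F. spf X S V F \<and>
     (\<forall>s\<in>S. \<forall>u\<in>V s - S. \<exists>d ys. par u = Some d \<and> tpath (F s) s u (ys @ [mv u d, u])))"

text \<open>A (uniform, deterministic) algorithm for anonymous constant-memory amoebots.  Each amoebot has, for every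
  direction d and every j < pins, one pin (d, j) (only pins towards occupied neighbours
  carry external links).  The partition of the pins is given by labelling each pin with
  the name of its partition set.  Pin (d,j) of u is linked to pin (opp d, j) of the
  neighbour in direction d (the labelling agreed on by the neighbours).\<close>
record alg =
  pins :: nat
  nstates :: nat
  init :: "bool \<Rightarrow> dir set \<Rightarrow> nat"        \<comment> \<open>in S?, occupied neighbour directions\<close>
  part :: "nat \<Rightarrow> dir \<Rightarrow> nat \<Rightarrow> nat"      \<comment> \<open>state, pin \<Rightarrow> partition set label\<close>
  beep :: "nat \<Rightarrow> nat set"                 \<comment> \<open>partition sets beeped on\<close>
  delta :: "nat \<Rightarrow> nat set \<Rightarrow> nat"         \<comment> \<open>state, partition sets that received a beep\<close>
  parent :: "nat \<Rightarrow> dir option"             \<comment> \<open>output: parent direction\<close>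

definition valid_alg :: "alg \<Rightarrow> bool" where
  "valid_alg A \<longleftrightarrow> (\<forall>b D. init A b D < nstates A) \<and>
     (\<forall>s R. s < nstates A \<longrightarrow> delta A s R < nstates A)"

text \<open>External links between partition sets (amoebot, label) in configuration \<sigma>.\<close>
definition link :: "alg \<Rightarrow> node set \<Rightarrow> (node \<Rightarrow> nat) \<Rightarrow> node \<times> nat \<Rightarrow> node \<times> nat \<Rightarrow> bool" where
  "link A X \<sigma> p q \<longleftrightarrow> fst p \<in> X \<and> (\<exists>d j. j < pins A \<and> fst q = mv (fst p) d \<and> fst q \<in> X \<and>
      snd p = part A (\<sigma> (fst p)) d j \<and> snd q = part A (\<sigma> (fst q)) (opp d) j)"

definition recv :: "alg \<Rightarrow> node set \<Rightarrow> (node \<Rightarrow> nat) \<Rightarrow> node \<Rightarrow> nat set" where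
  "recv A X \<sigma> u = {l. \<exists>w l'. w \<in> X \<and> l' \<in> beep A (\<sigma> w) \<and> (link A X \<sigma>)\<^sup>*\<^sup>* (u, l) (w, l')}"

definition occ :: "node set \<Rightarrow> node \<Rightarrow> dir set" where
  "occ X u = {d. mv u d \<in> X}"

fun run :: "alg \<Rightarrow> node set \<Rightarrow> node set \<Rightarrow> nat \<Rightarrow> node \<Rightarrow> nat" where
  "run A X S 0 = (\<lambda>u. init A (u \<in> S) (occ X u))"
| "run A X S (Suc t) = (\<lambda>u. delta A (run A X S t u) (recv A X (run A X S t) u))"

end

theory Submission
  imports Defs "HOL-Library.Log_Nat"
begin

(*
  For an amoebot u and a direction e, let a be the distance from u to the nearest amoebot of S
  strictly behind u along e. In round J + 1 every source beeps into a pair of lines along each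
  ray, and an amoebot swaps the two lines of the ray e exactly when 2^J divides a (primary and
  secondary circuits), so the line on which the beep arrives reveals bit J of a. From these bits
  u maintains whether a mod 2^J <= b mod 2^J for the distance b along opp e; once 2^J > n this
  compares the true distances, and the parent is the neighbour towards the nearer source. On a
  line, pointing towards a nearer source cuts the line into intervals, one around each source,
  and these intervals are the trees of an S-shortest path forest.
*)

section \<open>The algorithm\<close>

fun dir_index :: "dir \<Rightarrow> nat" where
  "dir_index E = 0" | "dir_index NE = 1" | "dir_index NW = 2"
| "dir_index W = 3" | "dir_index SW = 4" | "dir_index SE = 5"

definition dirs :: "dir list" where
  "dirs = [E, NE, NW, W, SW, SE]"

lemma dir_index_less: "dir_index e < 6"
  by (cases e) simp_all

lemma dir_index_inject [simp]: "dir_index e = dir_index e' \<longleftrightarrow> e = e'"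
  by (cases e; cases e') simp_all

lemma dirs_nth_dir_index: "dirs ! dir_index e = e"
  by (cases e) (simp_all add: dirs_def)

lemma length_dirs [simp]: "length dirs = 6"
  by (simp add: dirs_def)

lemma set_dirs: "e \<in> set dirs"
  by (cases e) (simp_all add: dirs_def)

lemma opp_opp [simp]: "opp (opp e) = e"
  by (cases e) simp_all

lemma opp_neq [simp]: "opp e \<noteq> e" "e \<noteq> opp e"
  by (cases e; simp)+

lemma opp_inject [simp]: "opp e = opp e' \<longleftrightarrow> e = e'"
  by (metis opp_opp)

lemma dvec_opp: "dvec (opp e) = (- fst (dvec e), - snd (dvec e))"
  by (cases e) simp_all

lemma mv_mv_opp [simp]: "mv (mv u e) (opp e) = u" "mv (mv u (opp e)) e = u"
  by (simp_all add: mv_def dvec_opp)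

text \<open>A state is a bit vector of length 19: membership in \<open>S\<close> and, for each direction \<open>e\<close>,
  three flags about the distance to the nearest amoebot of \<open>S\<close> behind it along \<open>e\<close>.\<close>

definition state_code :: "bool \<Rightarrow> (dir \<Rightarrow> bool) \<Rightarrow> (dir \<Rightarrow> bool) \<Rightarrow> (dir \<Rightarrow> bool) \<Rightarrow> nat" where
  "state_code src act reached nearer =
     horner_sum of_bool 2 (src # map act dirs @ map reached dirs @ map nearer dirs)"

definition st_source :: "nat \<Rightarrow> bool" where
  "st_source s = bit s 0"

definition st_active :: "nat \<Rightarrow> dir \<Rightarrow> bool" where
  "st_active s e = bit s (1 + dir_index e)"

definition st_reached :: "nat \<Rightarrow> dir \<Rightarrow> bool" where
  "st_reached s e = bit s (7 + dir_index e)"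

definition st_nearer :: "nat \<Rightarrow> dir \<Rightarrow> bool" where
  "st_nearer s e = bit s (13 + dir_index e)"

lemma bit_horner_sum_nat: "bit (horner_sum of_bool (2::nat) bs) i \<longleftrightarrow> i < length bs \<and> bs ! i"
  by (simp add: bit_horner_sum_bit_iff possible_bit_def)

lemma horner_sum_nat_less: "horner_sum of_bool (2::nat) bs < 2 ^ length bs"
  by (induction bs) auto

lemma state_code_less: "state_code src act reached nearer < 2 ^ 19"
  using horner_sum_nat_less[of "src # map act dirs @ map reached dirs @ map nearer dirs"]
  by (simp add: state_code_def dirs_def)

lemma state_code_sel [simp]:
  "st_source (state_code src act reached nearer) = src"
  "st_active (state_code src act reached nearer) e = act e"
  "st_reached (state_code src act reached nearer) e = reached e"
  "st_nearer (state_code src act reached nearer) e = nearer e"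
  unfolding st_source_def st_active_def st_reached_def st_nearer_def state_code_def
    bit_horner_sum_nat
  using dir_index_less[of e] by (simp_all add: nth_append dirs_nth_dir_index)

text \<open>Each ray direction \<open>e\<close> owns two lines. On the side of an amoebot facing \<open>e\<close> they use
  the pins \<open>j\<close> with \<open>j div 2 = ray_pair e\<close>, on the side facing \<open>opp e\<close> the same pins; the line
  of pin \<open>j\<close> is \<open>odd j\<close>. As \<open>ray_pair (opp e) = 1 - ray_pair e\<close>, linked pins of neighbours
  belong to the same ray and line.\<close>

fun ray_pair :: "dir \<Rightarrow> nat" where
  "ray_pair E = 0" | "ray_pair NE = 0" | "ray_pair NW = 0"
| "ray_pair W = 1" | "ray_pair SW = 1" | "ray_pair SE = 1"

definition pin_ray :: "dir \<Rightarrow> nat \<Rightarrow> dir" where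
  "pin_ray e j = (if j div 2 = ray_pair e then e else opp e)"

lemma ray_pair_le: "ray_pair e \<le> 1"
  by (cases e) simp_all

lemma ray_pair_opp_iff: "j < 4 \<Longrightarrow> j div 2 = ray_pair (opp e) \<longleftrightarrow> j div 2 \<noteq> ray_pair e"
  by (cases e) auto

lemma pin_ray_cases: "pin_ray e j = e \<or> pin_ray e j = opp e"
  by (simp add: pin_ray_def)

lemma pin_ray_opp: "j < 4 \<Longrightarrow> pin_ray (opp e) j = pin_ray e j"
  by (auto simp: pin_ray_def ray_pair_opp_iff)

text \<open>A source keeps each pin in a partition set of its own and beeps on the outgoing line
  \<open>False\<close> of every ray. Any other amoebot connects, for each ray \<open>e\<close>, the incoming line \<open>y\<close>
  (side \<open>opp e\<close>) with the outgoing line \<open>y\<close> (side \<open>e\<close>), or with the outgoing line \<open>\<not> y\<close>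
  if it is active for \<open>e\<close>.\<close>

definition pin_label :: "nat \<Rightarrow> dir \<Rightarrow> nat \<Rightarrow> nat" where
  "pin_label s e j =
     (if st_source s then 4 * dir_index e + j
      else if j div 2 = ray_pair e then 2 * dir_index e + of_bool (odd j \<noteq> st_active s e)
      else 2 * dir_index (opp e) + j mod 2)"

definition beep_sets :: "nat \<Rightarrow> nat set" where
  "beep_sets s = (if st_source s then {4 * dir_index e + 2 * ray_pair e | e. True} else {})"

definition heard :: "nat set \<Rightarrow> dir \<Rightarrow> bool" where
  "heard R e \<longleftrightarrow> 2 * dir_index e \<in> R \<or> 2 * dir_index e + 1 \<in> R"

definition heard_bit :: "nat \<Rightarrow> nat set \<Rightarrow> dir \<Rightarrow> bool" where
  "heard_bit s R e \<longleftrightarrow> (2 * dir_index e + 1 \<in> R) \<noteq> st_active s e"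

definition transition :: "nat \<Rightarrow> nat set \<Rightarrow> nat" where
  "transition s R =
     (if st_source s then s
      else state_code False
        (\<lambda>e. st_active s e \<and> \<not> (heard R e \<and> heard_bit s R e))
        (heard R)
        (\<lambda>e. if heard R e \<and> heard R (opp e) \<and> heard_bit s R e \<noteq> heard_bit s R (opp e)
             then heard_bit s R (opp e) else st_nearer s e))"

definition initial :: "bool \<Rightarrow> dir set \<Rightarrow> nat" where
  "initial src D = state_code src (\<lambda>_. True) (\<lambda>_. False) (\<lambda>_. True)"

definition parent_dir :: "nat \<Rightarrow> dir option" where
  "parent_dir s =
     (if st_source s then None
      else map_option opp (find (\<lambda>e. st_reached s e \<and> (\<not> st_reached s (opp e) \<or> st_nearer s e)) dirs))"

definition line_alg :: alg where
  "line_alg = \<lparr>pins = 4, nstates = 2 ^ 19, init = initial, part = pin_label, beep = beep_sets,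
     delta = transition, parent = parent_dir\<rparr>"

lemma line_alg_simps [simp]:
  "pins line_alg = 4" "nstates line_alg = 2 ^ 19" "init line_alg = initial"
  "part line_alg = pin_label" "beep line_alg = beep_sets" "delta line_alg = transition"
  "parent line_alg = parent_dir"
  by (simp_all add: line_alg_def)

lemma valid_line_alg: "valid_alg line_alg"
  using state_code_less[simplified] by (simp add: valid_alg_def initial_def transition_def)

lemma pin_label_source: "st_source s \<Longrightarrow> pin_label s e j = 4 * dir_index e + j"
  by (simp add: pin_label_def)

lemma pin_label_outgoing:
  "\<not> st_source s \<Longrightarrow>
     pin_label s e (2 * ray_pair e + of_bool y) = 2 * dir_index e + of_bool (y \<noteq> st_active s e)"
  using ray_pair_le[of e] by (simp add: pin_label_def)

lemma pin_label_incoming: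
  "\<not> st_source s \<Longrightarrow> pin_label s (opp e) (2 * ray_pair e + of_bool y) = 2 * dir_index e + of_bool y"
  using ray_pair_le[of e] ray_pair_opp_iff[of "2 * ray_pair e + of_bool y" e]
  by (simp add: pin_label_def)

section \<open>Distances to the sources along a ray\<close>

definition behind :: "dir \<Rightarrow> node \<Rightarrow> nat \<Rightarrow> node" where
  "behind e u a = (fst u - int a * fst (dvec e), snd u - int a * snd (dvec e))"

lemma behind_0 [simp]: "behind e u 0 = u"
  by (simp add: behind_def)

lemma behind_mv_Suc [simp]: "behind e (mv w e) (Suc a) = behind e w a"
  by (simp add: behind_def mv_def algebra_simps)

lemma behind_Suc: "behind e w (Suc a) = mv (behind e w a) (opp e)"
  by (simp add: behind_def mv_def dvec_opp algebra_simps)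

lemma behind_Suc_0: "behind e w (Suc 0) = mv w (opp e)"
  using behind_Suc[of e w 0] by simp

lemma behind_behind [simp]: "behind e (behind e u k) a = behind e u (k + a)"
  by (simp add: behind_def algebra_simps)

definition dist_behind :: "node set \<Rightarrow> dir \<Rightarrow> node \<Rightarrow> nat option" where
  "dist_behind S e u =
     (if \<exists>a>0. behind e u a \<in> S then Some (LEAST a. 0 < a \<and> behind e u a \<in> S) else None)"

lemma dist_behind_Some_iff:
  "dist_behind S e u = Some a \<longleftrightarrow>
     0 < a \<and> behind e u a \<in> S \<and> (\<forall>k. 0 < k \<longrightarrow> k < a \<longrightarrow> behind e u k \<notin> S)"
proof
  assume "dist_behind S e u = Some a"
  then have ex: "\<exists>a>0. behind e u a \<in> S" and a: "a = (LEAST a. 0 < a \<and> behind e u a \<in> S)"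
    by (auto simp: dist_behind_def split: if_splits)
  from ex have "0 < a \<and> behind e u a \<in> S"
    unfolding a by (rule LeastI_ex)
  with a show "0 < a \<and> behind e u a \<in> S \<and> (\<forall>k. 0 < k \<longrightarrow> k < a \<longrightarrow> behind e u k \<notin> S)"
    using not_less_Least by blast
next
  assume a: "0 < a \<and> behind e u a \<in> S \<and> (\<forall>k. 0 < k \<longrightarrow> k < a \<longrightarrow> behind e u k \<notin> S)"
  then have "(LEAST a. 0 < a \<and> behind e u a \<in> S) = a"
    by (intro Least_equality) (auto simp: not_less[symmetric])
  with a show "dist_behind S e u = Some a"
    by (auto simp: dist_behind_def)
qed

lemma dist_behind_None_iff: "dist_behind S e u = None \<longleftrightarrow> (\<forall>a>0. behind e u a \<notin> S)"
proof -
  have "dist_behind S e u = None \<longleftrightarrow> \<not> (\<exists>a>0. behind e u a \<in> S)"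
    by (simp add: dist_behind_def)
  then show ?thesis
    by blast
qed

lemma dist_behind_le:
  assumes "behind e u b \<in> S" "0 < b"
  obtains a where "dist_behind S e u = Some a" "a \<le> b"
proof (cases "dist_behind S e u")
  case None
  with assms show ?thesis
    by (simp add: dist_behind_None_iff)
next
  case (Some a)
  with assms have "a \<le> b"
    by (meson dist_behind_Some_iff not_le)
  with Some show ?thesis
    using that by blast
qed

lemma dist_behind_mv:
  "dist_behind S e (mv w e) = (if w \<in> S then Some 1 else map_option Suc (dist_behind S e w))"
proof -
  consider "w \<in> S" | "w \<notin> S" "dist_behind S e w = None"
    | a where "w \<notin> S" "dist_behind S e w = Some a"
    by fastforce
  then show ?thesis
  proof cases
    case 1
    then show ?thesis
      by (simp add: dist_behind_Some_iff behind_Suc_0)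
  next
    case 2
    then have "behind e (mv w e) (Suc a) \<notin> S" for a
      by (cases a) (auto simp: dist_behind_None_iff)
    then have "dist_behind S e (mv w e) = None"
      by (metis dist_behind_None_iff gr0_conv_Suc)
    with 2 show ?thesis
      by simp
  next
    case (3 a)
    then have "behind e (mv w e) (Suc k) \<notin> S" if "k < a" for k
      using that by (cases k) (auto simp: dist_behind_Some_iff)
    with 3 have "dist_behind S e (mv w e) = Some (Suc a)"
      by (auto simp: dist_behind_Some_iff gr0_conv_Suc)
    with 3 show ?thesis
      by simp
  qed
qed

lemma dist_behind_behind:
  assumes "dist_behind S e u = Some a" "k < a"
  shows "dist_behind S e (behind e u k) = Some (a - k)"
  using assms by (auto simp: dist_behind_Some_iff)

lemma dist_behind_opp_behind:
  assumes "u \<notin> S" "dist_behind S e u = Some a" "k < a"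
  shows "dist_behind S (opp e) (behind e u k) = map_option (\<lambda>b. b + k) (dist_behind S (opp e) u)"
  using assms(3)
proof (induction k)
  case (Suc k)
  have "behind e u k \<notin> S"
    using assms Suc.prems by (cases k) (auto simp: dist_behind_Some_iff)
  then show ?case
    using Suc dist_behind_mv[of S "opp e" "behind e u k"]
    by (simp add: behind_Suc option.map_comp comp_def)
qed (simp add: option.map_ident)

section \<open>The state after \<open>J\<close> rounds\<close>

lemma bit_iff_bit_pred:
  fixes a :: nat
  assumes "0 < a"
  shows "bit a J \<longleftrightarrow> bit (a - 1) J \<noteq> (take_bit J a = 0)"
proof -
  have "a div 2 ^ J = (a - 1) div 2 ^ J + of_bool (2 ^ J dvd a)"
    using assms by (cases a) (auto simp: div_Suc dvd_eq_mod_eq_0)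
  then show ?thesis
    by (simp add: bit_iff_odd take_bit_eq_0_iff)
qed

lemma take_bit_Suc_eq_0_iff: "take_bit (Suc J) a = 0 \<longleftrightarrow> take_bit J a = 0 \<and> \<not> bit a J"
  for a :: nat
  by (auto simp: take_bit_Suc_from_most)

lemma take_bit_Suc_le_iff:
  fixes a b :: nat
  shows "take_bit (Suc J) a \<le> take_bit (Suc J) b \<longleftrightarrow>
    (if bit a J = bit b J then take_bit J a \<le> take_bit J b else bit b J)"
  using take_bit_nat_less_exp[of J a] take_bit_nat_less_exp[of J b]
  by (auto simp: take_bit_Suc_from_most simp del: take_bit_nat_less_exp)

definition expected_state :: "node set \<Rightarrow> nat \<Rightarrow> node \<Rightarrow> nat" where
  "expected_state S J u =
     (if u \<in> S then initial True {}
      else state_code False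
        (\<lambda>e. case dist_behind S e u of None \<Rightarrow> True | Some a \<Rightarrow> take_bit J a = 0)
        (\<lambda>e. 0 < J \<and> dist_behind S e u \<noteq> None)
        (\<lambda>e. case (dist_behind S e u, dist_behind S (opp e) u) of
               (Some a, Some b) \<Rightarrow> take_bit J a \<le> take_bit J b
             | _ \<Rightarrow> True))"

lemma st_source_expected_state [simp]: "st_source (expected_state S J u) \<longleftrightarrow> u \<in> S"
  by (simp add: expected_state_def initial_def)

lemma st_active_expected_state:
  "u \<notin> S \<Longrightarrow> st_active (expected_state S J u) e =
     (case dist_behind S e u of None \<Rightarrow> True | Some a \<Rightarrow> take_bit J a = 0)"
  by (simp add: expected_state_def)

text \<open>In round \<open>J + 1\<close>, line \<open>y\<close> of the ray \<open>d\<close> on the link from \<open>w\<close> to \<open>mv w d\<close> is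
  connected to the outgoing line \<open>link_origin\<close> of the nearest source at or behind \<open>w\<close>: if it
  lies \<open>a\<close> steps behind \<open>mv w d\<close>, the \<open>(a - 1) div 2 ^ J\<close> active amoebots strictly in between
  swap the lines.\<close>

definition link_origin :: "node set \<Rightarrow> nat \<Rightarrow> dir \<Rightarrow> node \<Rightarrow> bool \<Rightarrow> (node \<times> bool) option" where
  "link_origin S J d w y =
     map_option (\<lambda>a. (behind d (mv w d) a, y \<noteq> bit (a - 1) J)) (dist_behind S d (mv w d))"

lemma link_origin_source: "w \<in> S \<Longrightarrow> link_origin S J d w y = Some (w, y)"
  by (simp add: link_origin_def dist_behind_mv behind_Suc_0)

lemma link_origin_step:
  assumes "w \<notin> S"
  shows "link_origin S J d w y =
    link_origin S J d (mv w (opp d)) (y \<noteq> st_active (expected_state S J w) d)"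
proof (cases "dist_behind S d w")
  case None
  with assms show ?thesis
    by (simp add: link_origin_def dist_behind_mv)
next
  case (Some a)
  then have "0 < a"
    by (simp add: dist_behind_Some_iff)
  with assms Some show ?thesis
    by (auto simp: link_origin_def dist_behind_mv st_active_expected_state bit_iff_bit_pred)
qed

definition pin_origin :: "node set \<Rightarrow> nat \<Rightarrow> dir \<Rightarrow> node \<Rightarrow> dir \<Rightarrow> nat \<Rightarrow> (node \<times> bool) option option"
  where
  "pin_origin S J d w e j =
     (if pin_ray e j = d
      then Some (link_origin S J d (if e = d then w else mv w (opp d)) (odd j)) else None)"

text \<open>The origin of a partition set \<open>(w, l)\<close> of the expected states, read off its label
  (\<open>None\<close> if it carries no line of the ray \<open>d\<close>); it is constant on every circuit.\<close>

fun pset_origin :: "node set \<Rightarrow> nat \<Rightarrow> dir \<Rightarrow> node \<times> nat \<Rightarrow> (node \<times> bool) option option" where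
  "pset_origin S J d (w, l) =
     (if w \<in> S then
        (if l div 4 = dir_index d \<and> l mod 4 div 2 = ray_pair d
         then Some (link_origin S J d w (odd l))
         else if l div 4 = dir_index (opp d) \<and> l mod 4 div 2 = ray_pair d
         then Some (link_origin S J d (mv w (opp d)) (odd l))
         else None)
      else if l div 2 = dir_index d then Some (link_origin S J d (mv w (opp d)) (odd l))
      else None)"

lemma pset_origin_source_pin:
  assumes "w \<in> S" "j < 4"
  shows "pset_origin S J d (w, 4 * dir_index e + j) = pin_origin S J d w e j"
proof -
  have label: "(4 * dir_index e + j) div 4 = dir_index e" "(4 * dir_index e + j) mod 4 = j"
    "odd (4 * dir_index e + j) = odd j"
    using assms(2) by auto
  consider "e = d" | "e = opp d" | "e \<noteq> d" "e \<noteq> opp d"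
    by blast
  then show ?thesis
  proof cases
    case 1
    with assms show ?thesis
      by (simp add: label pin_origin_def pin_ray_def)
  next
    case 2
    with assms show ?thesis
      by (simp add: label pin_origin_def pin_ray_def ray_pair_opp_iff)
  next
    case 3
    then have "pin_ray e j \<noteq> d"
      using pin_ray_cases[of e j] by auto
    with assms 3 show ?thesis
      by (simp add: label pin_origin_def)
  qed
qed

lemma pset_origin_nonsource_pin:
  assumes "w \<notin> S" "\<sigma> w = expected_state S J w"
  shows "pset_origin S J d (w, pin_label (\<sigma> w) e j) = pin_origin S J d w e j"
proof (cases "j div 2 = ray_pair e")
  case True
  then have "pin_label (\<sigma> w) e j = 2 * dir_index e + of_bool (odd j \<noteq> st_active (\<sigma> w) e)"
    using assms by (simp add: pin_label_def)
  with True assms show ?thesis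
    by (cases "e = d") (auto simp: pin_origin_def pin_ray_def link_origin_step[of w S J d])
next
  case False
  then have "pin_label (\<sigma> w) e j = 2 * dir_index (opp e) + j mod 2"
    using assms by (simp add: pin_label_def)
  with False assms show ?thesis
    by (cases "e = opp d") (auto simp: pin_origin_def pin_ray_def)
qed

lemma pset_origin_pin:
  assumes "\<sigma> w = expected_state S J w" "j < 4"
  shows "pset_origin S J d (w, pin_label (\<sigma> w) e j) = pin_origin S J d w e j"
proof (cases "w \<in> S")
  case True
  with assms show ?thesis
    using pset_origin_source_pin[OF True assms(2)] by (simp add: pin_label_source)
next
  case False
  then show ?thesis
    using assms(1) by (rule pset_origin_nonsource_pin)
qed

lemma pin_origin_link: "j < 4 \<Longrightarrow> pin_origin S J d u e j = pin_origin S J d (mv u e) (opp e) j"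
  using pin_ray_cases[of e j]
  by (cases "e = d"; cases "e = opp d") (auto simp: pin_origin_def pin_ray_opp)

lemma pset_origin_link:
  assumes \<sigma>: "\<forall>w\<in>X. \<sigma> w = expected_state S J w" and "link line_alg X \<sigma> p q"
  shows "pset_origin S J d p = pset_origin S J d q"
proof -
  obtain w e j where link: "p = (w, pin_label (\<sigma> w) e j)" "q = (mv w e, pin_label (\<sigma> (mv w e)) (opp e) j)"
    "w \<in> X" "mv w e \<in> X" "j < 4"
    using assms(2) unfolding link_def by (cases p; cases q) auto
  then show ?thesis
    using \<sigma> pset_origin_pin pin_origin_link by metis
qed

lemma pset_origin_circuit:
  assumes "\<forall>w\<in>X. \<sigma> w = expected_state S J w" and "(link line_alg X \<sigma>)\<^sup>*\<^sup>* p q"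
  shows "pset_origin S J d p = pset_origin S J d q"
  using assms(2) by induction (auto dest: pset_origin_link[OF assms(1)])

definition axis_convex :: "node set \<Rightarrow> bool" where
  "axis_convex X \<longleftrightarrow> (\<forall>u\<in>X. \<forall>e a k. behind e u a \<in> X \<longrightarrow> k \<le> a \<longrightarrow> behind e u k \<in> X)"

lemma link_pinsI:
  "w \<in> X \<Longrightarrow> mv w e \<in> X \<Longrightarrow> j < pins A \<Longrightarrow>
     link A X \<sigma> (w, part A (\<sigma> w) e j) (mv w e, part A (\<sigma> (mv w e)) (opp e) j)"
  by (auto simp: link_def)

lemma circuit_to_source:
  assumes \<sigma>: "\<forall>w\<in>X. \<sigma> w = expected_state S J w" and "S \<subseteq> X" "axis_convex X"
  shows "w \<in> X \<Longrightarrow> w \<notin> S \<Longrightarrow> dist_behind S d w = Some a \<Longrightarrow>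
    (link line_alg X \<sigma>)\<^sup>*\<^sup>* (w, 2 * dir_index d + of_bool (bit (a - 1) J))
      (behind d w a, 4 * dir_index d + 2 * ray_pair d)"
proof (induction a arbitrary: w)
  case 0
  then show ?case
    by (simp add: dist_behind_Some_iff)
next
  case (Suc a)
  define w' where "w' = mv w (opp d)"
  define j where "j = 2 * ray_pair d + of_bool (bit a J)"
  have "behind d w (Suc a) \<in> S"
    using Suc.prems by (simp add: dist_behind_Some_iff)
  then have "w' \<in> X"
    using assms(2,3) Suc.prems(1) unfolding axis_convex_def w'_def behind_Suc_0[symmetric]
    by (metis One_nat_def Suc_le_mono le0 subsetD)
  have w'_behind: "behind d w' a = behind d w (Suc a)"
    by (simp add: w'_def flip: behind_Suc_0)
  have "j < 4"
    using ray_pair_le[of d] by (simp add: j_def)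
  then have link: "link line_alg X \<sigma> (w, 2 * dir_index d + of_bool (bit a J)) (w', pin_label (\<sigma> w') d j)"
    using link_pinsI[of w X "opp d" j line_alg \<sigma>] \<sigma> Suc.prems \<open>w' \<in> X\<close>
    by (simp add: w'_def j_def pin_label_incoming)
  show ?case
  proof (cases "a = 0")
    case True
    with \<open>behind d w (Suc a) \<in> S\<close> have "w' \<in> S"
      by (simp add: w'_def behind_Suc)
    then have "pin_label (\<sigma> w') d j = 4 * dir_index d + 2 * ray_pair d"
      using \<sigma> \<open>w' \<in> X\<close> True by (simp add: j_def pin_label_source)
    with link True show ?thesis
      using w'_behind by simp
  next
    case False
    then have dist': "dist_behind S d w' = Some a"
      using dist_behind_behind[OF Suc.prems(3), of 1] by (simp add: w'_def behind_Suc)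
    have "w' \<notin> S"
      using Suc.prems(3) False by (auto simp: dist_behind_Some_iff w'_def simp flip: behind_Suc_0)
    then have "pin_label (\<sigma> w') d j = 2 * dir_index d + of_bool (bit (a - 1) J)"
      using \<sigma> \<open>w' \<in> X\<close> False dist'
      by (simp add: j_def pin_label_outgoing st_active_expected_state bit_iff_bit_pred)
    then show ?thesis
      using link Suc.IH[OF \<open>w' \<in> X\<close> \<open>w' \<notin> S\<close> dist'] w'_behind
      by (simp add: converse_rtranclp_into_rtranclp)
  qed
qed

lemma mem_recv_iff:
  assumes \<sigma>: "\<forall>w\<in>X. \<sigma> w = expected_state S J w" and "S \<subseteq> X" "axis_convex X"
    and u: "u \<in> X" "u \<notin> S"
  shows "2 * dir_index d + of_bool y \<in> recv line_alg X \<sigma> u \<longleftrightarrow>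
    (\<exists>a. dist_behind S d u = Some a \<and> y = bit (a - 1) J)"
proof
  assume "2 * dir_index d + of_bool y \<in> recv line_alg X \<sigma> u"
  then obtain w l where w: "w \<in> X" "l \<in> beep_sets (\<sigma> w)"
    and circuit: "(link line_alg X \<sigma>)\<^sup>*\<^sup>* (u, 2 * dir_index d + of_bool y) (w, l)"
    unfolding recv_def by auto
  then obtain e where "w \<in> S" and l: "l = pin_label (\<sigma> w) e (2 * ray_pair e)"
    using \<sigma> by (auto simp: beep_sets_def pin_label_def split: if_splits)
  have "pset_origin S J d (w, l) = pin_origin S J d w e (2 * ray_pair e)"
    unfolding l by (rule pset_origin_pin) (use \<sigma> w ray_pair_le[of e] in auto)
  also have "\<dots> = (if e = d then Some (Some (w, False)) else None)"
    using \<open>w \<in> S\<close> by (simp add: pin_origin_def pin_ray_def link_origin_source)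
  finally have "pset_origin S J d (w, l) = (if e = d then Some (Some (w, False)) else None)" .
  moreover have "pset_origin S J d (u, 2 * dir_index d + of_bool y) =
      Some (link_origin S J d (mv u (opp d)) y)"
    using u by simp
  ultimately have "link_origin S J d (mv u (opp d)) y = Some (w, False)"
    using pset_origin_circuit[OF \<sigma> circuit, of d] by (auto split: if_splits)
  then show "\<exists>a. dist_behind S d u = Some a \<and> y = bit (a - 1) J"
    by (auto simp: link_origin_def)
next
  assume "\<exists>a. dist_behind S d u = Some a \<and> y = bit (a - 1) J"
  then obtain a where a: "dist_behind S d u = Some a" "y = bit (a - 1) J"
    by blast
  define s where "s = behind d u a"
  have "s \<in> S"
    using a by (simp add: s_def dist_behind_Some_iff)
  then have "s \<in> X" "4 * dir_index d + 2 * ray_pair d \<in> beep_sets (\<sigma> s)"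
    using assms(2) \<sigma> by (auto simp: beep_sets_def)
  moreover have "(link line_alg X \<sigma>)\<^sup>*\<^sup>* (u, 2 * dir_index d + of_bool y)
      (s, 4 * dir_index d + 2 * ray_pair d)"
    using circuit_to_source[OF assms(1-3) u a(1)] a(2) by (simp add: s_def)
  ultimately show "2 * dir_index d + of_bool y \<in> recv line_alg X \<sigma> u"
    unfolding recv_def line_alg_simps by blast
qed

lemma heard_recv:
  assumes "\<forall>w\<in>X. \<sigma> w = expected_state S J w" "S \<subseteq> X" "axis_convex X" "u \<in> X" "u \<notin> S"
  shows "heard (recv line_alg X \<sigma> u) e \<longleftrightarrow> dist_behind S e u \<noteq> None"
    and "dist_behind S e u = Some a \<Longrightarrow> heard_bit (\<sigma> u) (recv line_alg X \<sigma> u) e \<longleftrightarrow> bit a J"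
proof -
  note recv = mem_recv_iff[OF assms, of e]
  show "heard (recv line_alg X \<sigma> u) e \<longleftrightarrow> dist_behind S e u \<noteq> None"
    using recv[of False] recv[of True] by (auto simp: heard_def)
  assume a: "dist_behind S e u = Some a"
  then have "0 < a"
    by (simp add: dist_behind_Some_iff)
  with a show "heard_bit (\<sigma> u) (recv line_alg X \<sigma> u) e \<longleftrightarrow> bit a J"
    using recv[of True] assms(1,4,5)
    by (simp add: heard_bit_def st_active_expected_state bit_iff_bit_pred)
qed

lemma transition_expected_state:
  assumes \<sigma>: "\<forall>w\<in>X. \<sigma> w = expected_state S J w" and "S \<subseteq> X" "axis_convex X" and "u \<in> X"
  shows "transition (\<sigma> u) (recv line_alg X \<sigma> u) = expected_state S (Suc J) u"
proof (cases "u \<in> S")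
  case True
  with \<sigma> \<open>u \<in> X\<close> show ?thesis
    by (simp add: transition_def expected_state_def initial_def)
next
  case False
  define R where "R = recv line_alg X \<sigma> u"
  have su: "\<sigma> u = expected_state S J u"
    using \<sigma> \<open>u \<in> X\<close> by blast
  note heard = heard_recv[OF assms False, folded R_def]
  have active: "(st_active (\<sigma> u) e \<and> \<not> (heard R e \<and> heard_bit (\<sigma> u) R e)) =
      (case dist_behind S e u of None \<Rightarrow> True | Some a \<Rightarrow> take_bit (Suc J) a = 0)" for e
    using heard[of e] False
    by (cases "dist_behind S e u") (auto simp: su st_active_expected_state take_bit_Suc_eq_0_iff)
  have nearer: "(if heard R e \<and> heard R (opp e) \<and> heard_bit (\<sigma> u) R e \<noteq> heard_bit (\<sigma> u) R (opp e)
       then heard_bit (\<sigma> u) R (opp e) else st_nearer (\<sigma> u) e) =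
     (case (dist_behind S e u, dist_behind S (opp e) u) of
        (Some a, Some b) \<Rightarrow> take_bit (Suc J) a \<le> take_bit (Suc J) b | _ \<Rightarrow> True)" for e
    using heard[of e] heard[of "opp e"] False
    by (auto simp: su expected_state_def take_bit_Suc_le_iff split: option.split)
  have "\<not> st_source (\<sigma> u)"
    using False su by simp
  then have "transition (\<sigma> u) R = state_code False
      (\<lambda>e. st_active (\<sigma> u) e \<and> \<not> (heard R e \<and> heard_bit (\<sigma> u) R e))
      (\<lambda>e. heard R e)
      (\<lambda>e. if heard R e \<and> heard R (opp e) \<and> heard_bit (\<sigma> u) R e \<noteq> heard_bit (\<sigma> u) R (opp e)
           then heard_bit (\<sigma> u) R (opp e) else st_nearer (\<sigma> u) e)"
    by (simp only: transition_def if_False)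
  also have "\<dots> = expected_state S (Suc J) u"
    using False unfolding expected_state_def by (simp only: active nearer) (simp add: heard(1))
  finally show ?thesis
    unfolding R_def .
qed

lemma run_eq_expected_state:
  assumes "S \<subseteq> X" "axis_convex X" "u \<in> X"
  shows "run line_alg X S J u = expected_state S J u"
  using assms(3)
proof (induction J arbitrary: u)
  case 0
  show ?case
    by (simp add: expected_state_def initial_def option.case_eq_if)
next
  case (Suc J)
  then show ?case
    using transition_expected_state[OF _ assms(1,2)] by simp
qed

definition towards_nearer_source :: "node set \<Rightarrow> node \<Rightarrow> dir option \<Rightarrow> bool" where
  "towards_nearer_source S u p \<longleftrightarrow>
     (\<exists>e a. p = Some (opp e) \<and> dist_behind S e u = Some a \<and>
        (\<forall>b. dist_behind S (opp e) u = Some b \<longrightarrow> a \<le> b))"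

lemma towards_nearer_source_parent_dir:
  assumes "u \<notin> S" "0 < J" and bound: "\<forall>e a. dist_behind S e u = Some a \<longrightarrow> a < 2 ^ J"
    and "dist_behind S e\<^sub>0 u = Some a\<^sub>0"
  shows "towards_nearer_source S u (parent_dir (expected_state S J u))"
proof -
  define s where "s = expected_state S J u"
  define Q where "Q e \<longleftrightarrow> st_reached s e \<and> (\<not> st_reached s (opp e) \<or> st_nearer s e)" for e
  have reached: "st_reached s e \<longleftrightarrow> dist_behind S e u \<noteq> None" for e
    using assms(1,2) by (simp add: s_def expected_state_def)
  have nearer: "st_nearer s e \<longleftrightarrow> a \<le> b"
    if "dist_behind S e u = Some a" "dist_behind S (opp e) u = Some b" for e a b
    using assms(1) bound that by (simp add: s_def expected_state_def take_bit_nat_eq_self)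
  have Q_towards: "towards_nearer_source S u (Some (opp e))" if "Q e" for e
    using that reached nearer by (fastforce simp: Q_def towards_nearer_source_def)
  have "Q e\<^sub>0 \<or> Q (opp e\<^sub>0)"
    using assms(4) reached nearer nearer[of "opp e\<^sub>0"] by (cases "dist_behind S (opp e\<^sub>0) u") (auto simp: Q_def)
  then obtain e where "find Q dirs = Some e"
    by (metis find_None_iff not_None_eq set_dirs)
  then have "parent_dir s = Some (opp e)" "Q e"
    using assms(1) by (auto simp: parent_dir_def s_def Q_def find_Some_iff)
  then show ?thesis
    using Q_towards s_def by simp
qed

lemma run_towards_nearer_source:
  assumes "S \<subseteq> X" "axis_convex X" "u \<in> X" "u \<notin> S" "0 < J"
    and "\<forall>e a. dist_behind S e u = Some a \<longrightarrow> a < 2 ^ J" "dist_behind S e u = Some a"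
  shows "towards_nearer_source S u (parent line_alg (run line_alg X S J u))"
  using assms towards_nearer_source_parent_dir run_eq_expected_state by simp

section \<open>Lines\<close>

definition int_seg :: "int \<Rightarrow> int \<Rightarrow> int list" where
  "int_seg a b = (if a \<le> b then [a..b] else rev [b..a])"

lemma int_seg_same [simp]: "int_seg a a = [a]"
  by (simp add: int_seg_def)

lemma int_seg_up: "a < b \<Longrightarrow> int_seg a b = a # int_seg (a + 1) b"
  by (simp add: int_seg_def upto_rec1)

lemma int_seg_down: "b < a \<Longrightarrow> int_seg a b = a # int_seg (a - 1) b"
  by (cases "a - 1 = b") (auto simp: int_seg_def upto_rec2[of b a])

lemma set_int_seg: "set (int_seg a b) = {min a b..max a b}"
  by (auto simp: int_seg_def)

lemma distinct_int_seg: "distinct (int_seg a b)"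
  by (simp add: int_seg_def)

lemma length_int_seg: "length (int_seg a b) = Suc (nat \<bar>a - b\<bar>)"
  by (auto simp: int_seg_def abs_if nat_add_distrib)

lemma int_seg_not_Nil: "int_seg a b \<noteq> []"
  by (simp add: int_seg_def)

lemma hd_int_seg: "hd (int_seg a b) = a"
  by (cases a b rule: linorder_cases) (simp_all add: int_seg_up int_seg_down)

lemma int_seg_snoc_up: "a < b \<Longrightarrow> \<exists>zs. int_seg a b = zs @ [b - 1, b]"
  using upto_rec2[of a b] upto_rec2[of a "b - 1"] by (simp add: int_seg_def)

lemma int_seg_snoc_down: "b < a \<Longrightarrow> \<exists>zs. int_seg a b = zs @ [b + 1, b]"
  using upto_rec1[of b a] upto_rec1[of "b + 1" a] by (simp add: int_seg_def)

lemma last_int_seg: "last (int_seg a b) = b"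
  by (cases a b rule: linorder_cases) (auto dest: int_seg_snoc_up int_seg_snoc_down)

lemma nth_int_seg:
  "k < length (int_seg a b) \<Longrightarrow> int_seg a b ! k = (if a \<le> b then a + int k else a - int k)"
  by (auto simp: int_seg_def rev_nth)

lemma int_seg_step:
  "Suc k < length (int_seg a b) \<Longrightarrow>
     int_seg a b ! Suc k = int_seg a b ! k + 1 \<or> int_seg a b ! Suc k = int_seg a b ! k - 1"
  by (simp add: nth_int_seg)

lemma all_Suc_less_length_Cons_Cons:
  "(\<forall>i. Suc i < length (x # y # ys) \<longrightarrow> P i) \<longleftrightarrow>
     P 0 \<and> (\<forall>i. Suc i < length (y # ys) \<longrightarrow> P (Suc i))"
  by (metis Suc_less_eq length_Cons not0_implies_Suc zero_less_Suc)

lemma walk_Cons_Cons: "walk X (x # y # ys) \<longleftrightarrow> x \<in> X \<and> grid_adj x y \<and> walk X (y # ys)"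
  unfolding walk_def all_Suc_less_length_Cons_Cons by auto

lemma epath_Cons_Cons: "epath F (x # y # ys) \<longleftrightarrow> {x, y} \<in> F \<and> epath F (y # ys)"
  unfolding epath_def all_Suc_less_length_Cons_Cons by auto

locale line_config =
  fixes p :: node and d :: dir and n :: nat and X S :: "node set"
  assumes X_eq: "X = {(fst p + int k * fst (dvec d), snd p + int k * snd (dvec d)) | k. k < n}"
    and S_subset: "S \<subseteq> X"
begin

definition pos :: "int \<Rightarrow> node" where
  "pos i = (fst p + i * fst (dvec d), snd p + i * snd (dvec d))"

lemma X_eq_pos: "X = pos ` {0..<int n}"
proof
  show "X \<subseteq> pos ` {0..<int n}"
    unfolding X_eq pos_def by force
  show "pos ` {0..<int n} \<subseteq> X"
  proof
    fix u assume "u \<in> pos ` {0..<int n}"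
    then obtain i where "0 \<le> i" "i < int n" "u = pos i"
      by auto
    then have "u = (fst p + int (nat i) * fst (dvec d), snd p + int (nat i) * snd (dvec d)) \<and> nat i < n"
      by (simp add: pos_def)
    then show "u \<in> X"
      unfolding X_eq by blast
  qed
qed

lemma pos_inject [simp]: "pos i = pos j \<longleftrightarrow> i = j"
  unfolding pos_def by (cases d) auto

lemma pos_in_X_iff: "pos i \<in> X \<longleftrightarrow> 0 \<le> i \<and> i < int n"
  unfolding X_eq_pos by auto

lemma in_X_E:
  assumes "u \<in> X"
  obtains i where "u = pos i" "0 \<le> i" "i < int n"
  using assms unfolding X_eq_pos by auto

lemma behind_pos: "behind d (pos i) a = pos (i - int a)"
  by (simp add: behind_def pos_def algebra_simps)

lemma behind_opp_pos: "behind (opp d) (pos i) a = pos (i + int a)"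
  by (simp add: behind_def pos_def dvec_opp algebra_simps)

lemma mv_pos: "mv (pos i) d = pos (i + 1)"
  by (simp add: mv_def pos_def algebra_simps)

lemma mv_opp_pos: "mv (pos i) (opp d) = pos (i - 1)"
  by (simp add: mv_def pos_def dvec_opp algebra_simps)

lemma behind_on_axis:
  assumes "behind e (pos i) a = pos k" "0 < a"
  shows "e = d \<or> e = opp d"
proof -
  have "(- int a * fst (dvec e), - int a * snd (dvec e)) =
      ((k - i) * fst (dvec d), (k - i) * snd (dvec d))"
    using assms(1) by (auto simp: behind_def pos_def algebra_simps)
  with assms(2) show ?thesis
    by (cases e; cases d) auto
qed

lemma behind_in_X_pos:
  assumes "behind e (pos i) a \<in> X" "0 < a"
  shows "e = d \<and> behind e (pos i) a = pos (i - int a) \<or>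
    e = opp d \<and> behind e (pos i) a = pos (i + int a)"
  using assms by (metis behind_on_axis in_X_E behind_pos behind_opp_pos)

lemma grid_adj_pos_iff: "grid_adj (pos i) (pos k) \<longleftrightarrow> k = i + 1 \<or> k = i - 1"
proof
  assume "grid_adj (pos i) (pos k)"
  then obtain e where "pos k = mv (pos i) e"
    by (auto simp: grid_adj_def)
  then have e: "behind (opp e) (pos i) 1 = pos k"
    by (simp add: behind_Suc_0)
  then consider "opp e = d" | "opp e = opp d"
    using behind_on_axis[of "opp e" i 1 k] by auto
  then show "k = i + 1 \<or> k = i - 1"
    by cases (use e in \<open>simp_all add: behind_pos behind_opp_pos\<close>)
next
  assume "k = i + 1 \<or> k = i - 1"
  then show "grid_adj (pos i) (pos k)"
    unfolding grid_adj_def using mv_pos mv_opp_pos by metis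
qed

lemma dist_behind_off_axis: "e \<noteq> d \<Longrightarrow> e \<noteq> opp d \<Longrightarrow> dist_behind S e (pos i) = None"
  using S_subset behind_in_X_pos by (auto simp: dist_behind_None_iff)

lemma axis_convex: "axis_convex X"
  unfolding axis_convex_def
proof (intro ballI allI impI)
  fix u e a k
  assume u: "u \<in> X" and behind: "behind e u a \<in> X" "k \<le> a"
  from u obtain i where i: "u = pos i" "0 \<le> i" "i < int n"
    by (rule in_X_E)
  show "behind e u k \<in> X"
  proof (cases "a = 0")
    case False
    with behind i show ?thesis
      using behind_in_X_pos[of e i a] by (auto simp: behind_pos behind_opp_pos pos_in_X_iff)
  qed (use behind in simp)
qed

lemma dist_behind_less:
  assumes "u \<in> X" "dist_behind S e u = Some a"
  shows "a < n"
proof -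
  obtain i where i: "u = pos i" "0 \<le> i" "i < int n"
    using assms(1) by (rule in_X_E)
  have "0 < a" "behind e u a \<in> X"
    using assms(2) S_subset by (auto simp: dist_behind_Some_iff)
  with i show ?thesis
    using behind_in_X_pos[of e i a] by (auto simp: pos_in_X_iff)
qed

lemma dist_behind_exists:
  assumes "u \<in> X" "u \<notin> S" "s \<in> S"
  obtains e a where "dist_behind S e u = Some a"
proof -
  obtain i k where "u = pos i" "s = pos k" "k \<noteq> i"
    using assms S_subset by (metis in_X_E subsetD)
  then have "behind d u (nat (i - k)) \<in> S \<and> 0 < nat (i - k) \<or>
      behind (opp d) u (nat (k - i)) \<in> S \<and> 0 < nat (k - i)"
    using assms(3) by (auto simp: behind_pos behind_opp_pos)
  then show ?thesis
    using that by (metis dist_behind_le)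
qed

lemma walk_length_ge:
  "walk X xs \<Longrightarrow> hd xs = pos a \<Longrightarrow> last xs = pos b \<Longrightarrow> nat \<bar>a - b\<bar> + 1 \<le> length xs"
proof (induction xs arbitrary: a rule: induct_list012)
  case (3 x y ys)
  then have "grid_adj (pos a) y" "walk X (y # ys)"
    by (simp_all add: walk_Cons_Cons)
  moreover obtain c where "y = pos c"
    using \<open>walk X (y # ys)\<close> by (auto simp: walk_def elim: in_X_E)
  ultimately have "c = a + 1 \<or> c = a - 1" "nat \<bar>c - b\<bar> + 1 \<le> length (y # ys)"
    using "3.IH"(2)[of c] "3.prems"(3) by (simp_all add: grid_adj_pos_iff)
  then show ?case
    by auto
qed (auto simp: walk_def)

lemma walk_int_seg: "pos a \<in> X \<Longrightarrow> pos b \<in> X \<Longrightarrow> walk X (map pos (int_seg a b))"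
  by (auto simp: walk_def set_int_seg pos_in_X_iff int_seg_not_Nil length_int_seg nth_int_seg
      grid_adj_pos_iff)

lemma gdist_pos:
  assumes "pos a \<in> X" "pos b \<in> X"
  shows "gdist X (pos a) (pos b) = nat \<bar>a - b\<bar>"
  unfolding gdist_def
proof (rule Least_equality)
  show "\<exists>xs. walk X xs \<and> hd xs = pos a \<and> last xs = pos b \<and> length xs = Suc (nat \<bar>a - b\<bar>)"
    using walk_int_seg[OF assms] int_seg_not_Nil[of a b]
    by (intro exI[of _ "map pos (int_seg a b)"])
      (simp add: hd_map last_map hd_int_seg last_int_seg length_int_seg)
qed (use walk_length_ge in fastforce)

lemma dist_behind_same_axis:
  assumes "dist_behind S e (pos i) \<noteq> None" "dist_behind S e' (pos i) \<noteq> None"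
  shows "e' = e \<or> e' = opp e"
  using assms dist_behind_off_axis by (metis opp_opp)

lemma gdist_behind:
  assumes "u \<in> X" "behind e u a \<in> X"
  shows "gdist X (behind e u a) u = a"
proof -
  from assms(1) obtain i where "u = pos i" "pos i \<in> X"
    by (metis in_X_E)
  with assms(2) show ?thesis
    using behind_in_X_pos[of e i a] gdist_pos by (cases "a = 0") auto
qed

lemma behind_gdist:
  assumes "u \<in> X" "v \<in> X" "v \<noteq> u"
  obtains e where "v = behind e u (gdist X v u)" "0 < gdist X v u"
proof -
  obtain i k where "u = pos i" "v = pos k" "pos i \<in> X" "pos k \<in> X" "k \<noteq> i"
    using assms by (metis in_X_E)
  then show ?thesis
    using that[of d] that[of "opp d"]
    by (cases "k < i") (auto simp: gdist_pos behind_pos behind_opp_pos)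
qed

definition seg_edges :: "int set \<Rightarrow> node set set" where
  "seg_edges I = {{pos i, pos (i + 1)} | i. i \<in> I \<and> i + 1 \<in> I}"

lemma pos_pair_in_seg_edges:
  "{pos i, pos k} \<in> seg_edges I \<longleftrightarrow> i \<in> I \<and> k \<in> I \<and> (k = i + 1 \<or> k = i - 1)"
proof
  assume "{pos i, pos k} \<in> seg_edges I"
  then show "i \<in> I \<and> k \<in> I \<and> (k = i + 1 \<or> k = i - 1)"
    by (auto simp: seg_edges_def doubleton_eq_iff)
next
  assume "i \<in> I \<and> k \<in> I \<and> (k = i + 1 \<or> k = i - 1)"
  then show "{pos i, pos k} \<in> seg_edges I"
    unfolding seg_edges_def by (auto intro!: exI[of _ "min i k"] simp: insert_commute)
qed

lemma seg_edges_subset_edgesX: "(\<And>i. i \<in> I \<Longrightarrow> pos i \<in> X) \<Longrightarrow> seg_edges I \<subseteq> edgesX X"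
  unfolding seg_edges_def edgesX_def by (fastforce simp: grid_adj_pos_iff)

lemma epath_seg_edges_eq_int_seg:
  "epath (seg_edges I) xs \<Longrightarrow> distinct xs \<Longrightarrow> hd xs = pos a \<Longrightarrow> \<exists>b. xs = map pos (int_seg a b)"
proof (induction xs arbitrary: a rule: induct_list012)
  case (2 x)
  then show ?case
    by (intro exI[of _ a]) simp
next
  case (3 x y ys)
  then have x: "x = pos a" and "{pos a, y} \<in> seg_edges I" "epath (seg_edges I) (y # ys)"
    by (simp_all add: epath_Cons_Cons)
  then obtain c where y: "y = pos c" and c: "c = a + 1 \<or> c = a - 1"
    by (auto simp: seg_edges_def doubleton_eq_iff)
  have "\<exists>b. y # ys = map pos (int_seg c b)"
    using "3.prems"(2) \<open>epath _ (y # ys)\<close> y by (intro "3.IH"(2)) auto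
  then obtain b where b: "y # ys = map pos (int_seg c b)" ..
  have "pos a \<notin> set (y # ys)"
    using "3.prems"(2) x by simp
  then have "a \<notin> set (int_seg c b)"
    unfolding b by auto
  with c have "int_seg a b = a # int_seg c b"
    by (auto simp: set_int_seg int_seg_up[of a b] int_seg_down[of b a])
  with x b show ?case
    by (intro exI[of _ b]) simp
qed (simp add: epath_def)

context
  fixes I :: "int set"
  assumes I_convex: "\<And>i j m. i \<in> I \<Longrightarrow> j \<in> I \<Longrightarrow> i \<le> m \<Longrightarrow> m \<le> j \<Longrightarrow> m \<in> I"
begin

lemma epath_seg_edges_int_seg:
  assumes "a \<in> I" "b \<in> I"
  shows "epath (seg_edges I) (map pos (int_seg a b))"
proof -
  have "min a b \<in> I" "max a b \<in> I"
    using assms by (simp_all add: min_def max_def)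
  have "set (int_seg a b) \<subseteq> I"
  proof
    fix m assume "m \<in> set (int_seg a b)"
    then have "min a b \<le> m" "m \<le> max a b"
      by (simp_all add: set_int_seg)
    with \<open>min a b \<in> I\<close> \<open>max a b \<in> I\<close> show "m \<in> I"
      by (rule I_convex)
  qed
  show ?thesis
    unfolding epath_def
  proof (intro conjI allI impI)
    show "map pos (int_seg a b) \<noteq> []"
      by (simp add: int_seg_not_Nil)
  next
    fix k assume k: "Suc k < length (map pos (int_seg a b))"
    then have "int_seg a b ! k \<in> I" "int_seg a b ! Suc k \<in> I"
      using \<open>set (int_seg a b) \<subseteq> I\<close> by (simp_all add: subset_iff)
    moreover have "int_seg a b ! Suc k = int_seg a b ! k + 1 \<or> int_seg a b ! Suc k = int_seg a b ! k - 1"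
      using k int_seg_step by simp
    ultimately show "{map pos (int_seg a b) ! k, map pos (int_seg a b) ! Suc k} \<in> seg_edges I"
      using k by (simp add: pos_pair_in_seg_edges)
  qed
qed

lemma tpath_seg_edges_iff:
  assumes "a \<in> I" "b \<in> I"
  shows "tpath (seg_edges I) (pos a) (pos b) xs \<longleftrightarrow> xs = map pos (int_seg a b)"
proof
  assume "tpath (seg_edges I) (pos a) (pos b) xs"
  then have "epath (seg_edges I) xs" "distinct xs" "hd xs = pos a" "last xs = pos b"
    by (simp_all add: tpath_def)
  moreover obtain b' where "xs = map pos (int_seg a b')"
    using epath_seg_edges_eq_int_seg calculation(1-3) by blast
  ultimately show "xs = map pos (int_seg a b)"
    by (simp add: last_map int_seg_not_Nil last_int_seg)
next
  assume "xs = map pos (int_seg a b)"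
  then show "tpath (seg_edges I) (pos a) (pos b) xs"
    using epath_seg_edges_int_seg[OF assms] distinct_int_seg[of a b] int_seg_not_Nil[of a b]
    by (simp add: tpath_def distinct_map inj_on_def hd_map last_map hd_int_seg last_int_seg)
qed

lemma is_tree_seg_edges:
  assumes "I \<noteq> {}"
  shows "is_tree (pos ` I) (seg_edges I)"
  unfolding is_tree_def
proof (intro conjI ballI)
  show "pos ` I \<noteq> {}"
    using assms by simp
next
  fix e assume "e \<in> seg_edges I"
  then obtain i where "e = {pos i, pos (i + 1)}" "i \<in> I" "i + 1 \<in> I"
    by (auto simp: seg_edges_def)
  then show "\<exists>u v. e = {u, v} \<and> u \<noteq> v \<and> u \<in> pos ` I \<and> v \<in> pos ` I"
    by (intro exI[of _ "pos i"] exI[of _ "pos (i + 1)"]) simp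
next
  fix u v assume "u \<in> pos ` I" "v \<in> pos ` I"
  then show "\<exists>!xs. tpath (seg_edges I) u v xs"
    using tpath_seg_edges_iff by auto
qed

end

end

section \<open>Parents towards a nearer source on a line\<close>

locale line_parents = line_config +
  fixes par :: "node \<Rightarrow> dir option"
  assumes towards: "\<And>u. u \<in> X \<Longrightarrow> u \<notin> S \<Longrightarrow> towards_nearer_source S u (par u)"
begin

lemma parent_towardsE:
  assumes "u \<in> X" "u \<notin> S"
  obtains e a where "par u = Some (opp e)" "dist_behind S e u = Some a"
    "\<forall>b. dist_behind S (opp e) u = Some b \<longrightarrow> a \<le> b"
  using towards[OF assms] unfolding towards_nearer_source_def by blast

lemma parent_nearest:
  assumes "u \<in> X" "u \<notin> S" "par u = Some (opp e)" "dist_behind S e u = Some a"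
    and "dist_behind S e' u = Some b"
  shows "a \<le> b"
proof -
  obtain i where u: "u = pos i"
    using assms(1) by (rule in_X_E)
  obtain e\<^sub>0 a\<^sub>0 where "par u = Some (opp e\<^sub>0)" "dist_behind S e\<^sub>0 u = Some a\<^sub>0"
    "\<forall>b. dist_behind S (opp e\<^sub>0) u = Some b \<longrightarrow> a\<^sub>0 \<le> b"
    using assms(1,2) by (rule parent_towardsE)
  moreover have "e' = e \<or> e' = opp e"
    using dist_behind_same_axis[of e i e'] assms(4,5) u by simp
  ultimately show ?thesis
    using assms(3-5) by auto
qed

lemma parent_along_segment:
  assumes u: "u \<in> X" "u \<notin> S" and par: "par u = Some (opp e)"
    and dist: "dist_behind S e u = Some a" and "k < a"
  shows "behind e u k \<in> X \<and> behind e u k \<notin> S \<and> par (behind e u k) = Some (opp e)"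
proof (cases "k = 0")
  case False
  define w where "w = behind e u k"
  have "w \<notin> S" "behind e u a \<in> X"
    using dist \<open>k < a\<close> False S_subset by (auto simp: w_def dist_behind_Some_iff)
  then have "w \<in> X"
    using axis_convex u \<open>k < a\<close> by (auto simp: w_def axis_convex_def)
  have dist_w: "dist_behind S e w = Some (a - k)"
    using dist_behind_behind[OF dist \<open>k < a\<close>] by (simp add: w_def)
  obtain e' a' where par_w: "par w = Some (opp e')" "dist_behind S e' w = Some a'"
    using \<open>w \<in> X\<close> \<open>w \<notin> S\<close> by (rule parent_towardsE)
  have "e' = e"
  proof (rule ccontr)
    assume "e' \<noteq> e"
    then have "e' = opp e"
      using \<open>w \<in> X\<close> dist_w par_w(2) dist_behind_same_axis by (metis in_X_E option.distinct(1))
    then obtain b where b: "dist_behind S (opp e) u = Some b" "a' = b + k"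
      using par_w(2) dist_behind_opp_behind[OF u(2) dist \<open>k < a\<close>] by (auto simp: w_def)
    have "a' \<le> a - k"
      using parent_nearest[OF \<open>w \<in> X\<close> \<open>w \<notin> S\<close> par_w dist_w] .
    moreover have "a \<le> b"
      using parent_nearest[OF u par dist b(1)] .
    ultimately show False
      using b(2) False by linarith
  qed
  with \<open>w \<in> X\<close> \<open>w \<notin> S\<close> par_w show ?thesis
    by (simp add: w_def)
qed (use u par in simp)

definition root :: "node \<Rightarrow> node" where
  "root u = (if u \<in> S then u
     else behind (opp (the (par u))) u (the (dist_behind S (opp (the (par u))) u)))"

lemma root_nonsource:
  "u \<notin> S \<Longrightarrow> par u = Some (opp e) \<Longrightarrow> dist_behind S e u = Some a \<Longrightarrow> root u = behind e u a"
  by (simp add: root_def)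

lemma root_source: "u \<in> S \<Longrightarrow> root u = u"
  by (simp add: root_def)

lemma root_in_S:
  assumes "u \<in> X"
  shows "root u \<in> S"
proof (cases "u \<in> S")
  case False
  with assms obtain e a where "par u = Some (opp e)" "dist_behind S e u = Some a"
    by (rule parent_towardsE)
  with False show ?thesis
    by (simp add: root_nonsource dist_behind_Some_iff)
qed (simp add: root_source)

lemma root_behind:
  assumes "u \<in> X" "u \<notin> S" "par u = Some (opp e)" "dist_behind S e u = Some a" "k \<le> a"
  shows "root (behind e u k) = root u"
proof (cases "k = a")
  case True
  with assms show ?thesis
    by (simp add: root_nonsource root_source dist_behind_Some_iff)
next
  case False
  with assms have "k < a"
    by simp
  with assms show ?thesis
    using parent_along_segment[OF assms(1-4) \<open>k < a\<close>] dist_behind_behind[OF assms(4) \<open>k < a\<close>]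
    by (simp add: root_nonsource)
qed

lemma root_between:
  assumes "pos i \<in> X" "root (pos i) = pos k" "min i k \<le> m" "m \<le> max i k"
  shows "root (pos m) = pos k"
proof (cases "pos i \<in> S")
  case True
  with assms show ?thesis
    by (simp add: root_source)
next
  case False
  with assms(1) obtain e a where par: "par (pos i) = Some (opp e)" "dist_behind S e (pos i) = Some a"
    by (rule parent_towardsE)
  then have root: "root (pos i) = behind e (pos i) a" "behind e (pos i) a \<in> X" "0 < a"
    using False S_subset by (auto simp: root_nonsource dist_behind_Some_iff)
  then consider "e = d" "k = i - int a" | "e = opp d" "k = i + int a"
    using behind_in_X_pos[of e i a] assms(2) by auto
  then show ?thesis
  proof cases
    case 1
    then have "pos m = behind e (pos i) (nat (i - m))" "nat (i - m) \<le> a"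
      using assms(3,4) by (auto simp: behind_pos)
    then show ?thesis
      using root_behind[OF assms(1) False par] assms(2) by simp
  next
    case 2
    then have "pos m = behind e (pos i) (nat (m - i))" "nat (m - i) \<le> a"
      using assms(3,4) by (auto simp: behind_opp_pos)
    then show ?thesis
      using root_behind[OF assms(1) False par] assms(2) by simp
  qed
qed

lemma root_closest:
  assumes "u \<in> X" "s \<in> S"
  shows "gdist X (root u) u \<le> gdist X s u"
proof (cases "u \<in> S")
  case True
  with assms(1) show ?thesis
    using gdist_behind[of u E 0] by (simp add: root_source)
next
  case False
  with assms(1) obtain e a where par: "par u = Some (opp e)" "dist_behind S e u = Some a"
    by (rule parent_towardsE)
  then have "behind e u a \<in> X"
    using S_subset by (auto simp: dist_behind_Some_iff)
  then have "gdist X (root u) u = a"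
    using gdist_behind[OF assms(1)] False par by (simp add: root_nonsource)
  moreover obtain e' where "s = behind e' u (gdist X s u)" "0 < gdist X s u"
    using behind_gdist[OF assms(1)] assms(2) False S_subset by blast
  then obtain a' where "dist_behind S e' u = Some a'" "a' \<le> gdist X s u"
    using assms(2) by (metis dist_behind_le)
  ultimately show ?thesis
    using parent_nearest[OF assms(1) False par] by fastforce
qed


definition tree_idx :: "node \<Rightarrow> int set" where
  "tree_idx s = {i. pos i \<in> X \<and> root (pos i) = s}"

lemma source_in_tree_idx:
  assumes "s \<in> S"
  obtains k where "s = pos k" "k \<in> tree_idx s"
proof -
  obtain k where "s = pos k" "pos k \<in> X"
    using assms S_subset by (metis in_X_E subsetD)
  with assms show ?thesis
    using that by (simp add: tree_idx_def root_source)
qed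

lemma tree_idx_convex:
  assumes "i \<in> tree_idx s" "j \<in> tree_idx s" "i \<le> m" "m \<le> j"
  shows "m \<in> tree_idx s"
proof -
  have i: "pos i \<in> X" "root (pos i) = s" and j: "pos j \<in> X" "root (pos j) = s"
    using assms(1,2) by (simp_all add: tree_idx_def)
  then obtain k where k: "s = pos k"
    using root_in_S S_subset by (metis in_X_E subsetD)
  have "root (pos m) = s"
    using root_between[OF i(1), of k m] root_between[OF j(1), of k m] i j k assms(3,4)
    by (cases "m \<le> k") auto
  moreover have "pos m \<in> X"
    using i(1) j(1) assms(3,4) by (simp add: pos_in_X_iff)
  ultimately show ?thesis
    by (simp add: tree_idx_def)
qed

lemma tpath_tree_iff:
  "k \<in> tree_idx s \<Longrightarrow> i \<in> tree_idx s \<Longrightarrow>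
     tpath (seg_edges (tree_idx s)) (pos k) (pos i) xs \<longleftrightarrow> xs = map pos (int_seg k i)"
  by (rule tpath_seg_edges_iff) (erule (3) tree_idx_convex)

lemma UN_tree_idx: "(\<Union>s\<in>S. pos ` tree_idx s) = X"
proof
  show "(\<Union>s\<in>S. pos ` tree_idx s) \<subseteq> X"
    by (auto simp: tree_idx_def)
  show "X \<subseteq> (\<Union>s\<in>S. pos ` tree_idx s)"
  proof
    fix u assume "u \<in> X"
    then obtain i where "u = pos i"
      by (rule in_X_E)
    with \<open>u \<in> X\<close> have "i \<in> tree_idx (root u)" "root u \<in> S"
      by (simp_all add: tree_idx_def root_in_S)
    with \<open>u = pos i\<close> show "u \<in> (\<Union>s\<in>S. pos ` tree_idx s)"
      by blast
  qed
qed

lemma spf_trees: "spf X S (\<lambda>s. pos ` tree_idx s) (\<lambda>s. seg_edges (tree_idx s))"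
  unfolding spf_def
proof (intro conjI ballI impI allI)
  fix s assume "s \<in> S"
  then obtain k where k: "s = pos k" "k \<in> tree_idx s"
    by (rule source_in_tree_idx)
  then show "is_tree (pos ` tree_idx s) (seg_edges (tree_idx s))"
    by (intro is_tree_seg_edges) (auto elim: tree_idx_convex)
  show "s \<in> pos ` tree_idx s" "pos ` tree_idx s \<subseteq> X" "seg_edges (tree_idx s) \<subseteq> edgesX X"
    using k by (auto simp: tree_idx_def intro!: seg_edges_subset_edgesX)
next
  fix s s' assume "s \<in> S" "s' \<in> S" "s \<noteq> s'"
  then show "pos ` tree_idx s \<inter> pos ` tree_idx s' = {}"
    by (auto simp: tree_idx_def)
next
  show "(\<Union>s\<in>S. pos ` tree_idx s) = X"
    by (rule UN_tree_idx)
next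
  fix s u xs assume "s \<in> S" "u \<in> pos ` tree_idx s" "tpath (seg_edges (tree_idx s)) s u xs"
  moreover obtain k where k: "s = pos k" "k \<in> tree_idx s"
    using \<open>s \<in> S\<close> by (rule source_in_tree_idx)
  moreover obtain i where i: "u = pos i" "i \<in> tree_idx s"
    using \<open>u \<in> pos ` tree_idx s\<close> by blast
  ultimately have "xs = map pos (int_seg k i)"
    using tpath_tree_iff by simp
  with k i show "length xs = Suc (gdist X s u)"
    by (simp add: length_int_seg gdist_pos tree_idx_def)
next
  fix s u s' assume "s \<in> S" "u \<in> pos ` tree_idx s" "s' \<in> S"
  then have "u \<in> X" "root u = s"
    by (auto simp: tree_idx_def)
  with \<open>s' \<in> S\<close> show "gdist X s u \<le> gdist X s' u"
    using root_closest by blast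
qed

lemma computes_spf_parents: "computes_spf X S par"
  unfolding computes_spf_def
proof (intro exI[of _ "\<lambda>s. pos ` tree_idx s"] exI[of _ "\<lambda>s. seg_edges (tree_idx s)"] conjI ballI)
  show "spf X S (\<lambda>s. pos ` tree_idx s) (\<lambda>s. seg_edges (tree_idx s))"
    by (rule spf_trees)
  fix s u assume "s \<in> S" "u \<in> pos ` tree_idx s - S"
  then obtain k i where k: "s = pos k" "k \<in> tree_idx s" and i: "u = pos i" "i \<in> tree_idx s"
    and "u \<notin> S" "u \<in> X" "root u = s"
    by (auto simp: tree_idx_def elim: source_in_tree_idx)
  then obtain e a where par: "par u = Some (opp e)" "dist_behind S e u = Some a"
    by (elim parent_towardsE)
  then have "behind e (pos i) a = pos k" "behind e (pos i) a \<in> X" "0 < a"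
    using S_subset \<open>u \<notin> S\<close> \<open>root u = s\<close> k i by (auto simp: root_nonsource dist_behind_Some_iff)
  then consider "e = d" "k < i" | "e = opp d" "i < k"
    using behind_in_X_pos[of e i a] by auto
  then show "\<exists>d' ys. par u = Some d' \<and> tpath (seg_edges (tree_idx s)) s u (ys @ [mv u d', u])"
  proof cases
    case 1
    then obtain zs where "int_seg k i = zs @ [i - 1, i]"
      using int_seg_snoc_up by blast
    with 1 show ?thesis
      using par tpath_tree_iff[OF k(2) i(2)] k(1) i(1)
      by (intro exI[of _ "opp d"] exI[of _ "map pos zs"]) (simp add: mv_opp_pos)
  next
    case 2
    then obtain zs where "int_seg k i = zs @ [i + 1, i]"
      using int_seg_snoc_down by blast
    with 2 show ?thesis
      using par tpath_tree_iff[OF k(2) i(2)] k(1) i(1)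
      by (intro exI[of _ d] exI[of _ "map pos zs"]) (simp add: mv_pos)
  qed
qed

end

lemma (in line_config) computes_spf_run:
  assumes "s \<in> S" "n < 2 ^ t"
  shows "computes_spf X S (\<lambda>u. parent line_alg (run line_alg X S t u))"
proof -
  have "0 < t"
    using assms S_subset by (auto elim!: in_X_E intro!: gr0I)
  have "towards_nearer_source S u (parent line_alg (run line_alg X S t u))" if u: "u \<in> X" "u \<notin> S" for u
  proof -
    obtain e a where "dist_behind S e u = Some a"
      using u assms(1) by (rule dist_behind_exists)
    moreover have "\<forall>e a. dist_behind S e u = Some a \<longrightarrow> a < 2 ^ t"
      using dist_behind_less[OF \<open>u \<in> X\<close>] assms(2) by (meson less_trans)
    ultimately show ?thesis
      using run_towards_nearer_source[OF S_subset axis_convex u \<open>0 < t\<close>] by blast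
  qed
  then interpret line_parents p d n X S "\<lambda>u. parent line_alg (run line_alg X S t u)"
    by unfold_locales
  show ?thesis
    by (rule computes_spf_parents)
qed

lemma floorlog_2_bounds:
  assumes "1 \<le> n"
  shows "n < 2 ^ floorlog 2 n" "real (floorlog 2 n) \<le> 1 + log 2 (real n)"
proof -
  show "n < 2 ^ floorlog 2 n"
    using floorlog_bounds[of n 2] assms by simp
  have "0 \<le> log 2 (real n)"
    using assms by simp
  then show "real (floorlog 2 n) \<le> 1 + log 2 (real n)"
    using assms by (simp add: floorlog_def)
qed

theorem mainTheorem10:
  shows "\<exists>A C. valid_alg A \<and>
    (\<forall>X S n. amoebot_structure X \<and> is_line X n \<and> S \<subseteq> X \<and> S \<noteq> {} \<longrightarrow>
       (\<exists>t. real t \<le> C * (1 + log 2 (real n)) \<and>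
            (\<forall>t'\<ge>t. computes_spf X S (\<lambda>u. parent A (run A X S t' u)))))"
proof (intro exI[of _ line_alg] exI[of _ "1::real"] conjI allI impI)
  show "valid_alg line_alg"
    by (rule valid_line_alg)
  fix X S n
  assume "amoebot_structure X \<and> is_line X n \<and> S \<subseteq> X \<and> S \<noteq> {}"
  then obtain p d s where "X = {(fst p + int k * fst (dvec d), snd p + int k * snd (dvec d)) | k. k < n}"
    and "1 \<le> n" "S \<subseteq> X" "s \<in> S"
    unfolding is_line_def by blast
  then interpret line_config p d n X S
    by unfold_locales
  note rounds = floorlog_2_bounds[OF \<open>1 \<le> n\<close>]
  show "\<exists>t. real t \<le> 1 * (1 + log 2 (real n)) \<and>
      (\<forall>t'\<ge>t. computes_spf X S (\<lambda>u. parent line_alg (run line_alg X S t' u)))"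
  proof (intro exI[of _ "floorlog 2 n"] conjI allI impI)
    show "real (floorlog 2 n) \<le> 1 * (1 + log 2 (real n))"
      using rounds by simp
    fix t assume "floorlog 2 n \<le> t"
    then have "n < 2 ^ t"
      using rounds(1) by (metis less_le_trans one_le_numeral power_increasing)
    with \<open>s \<in> S\<close> show "computes_spf X S (\<lambda>u. parent line_alg (run line_alg X S t u))"
      by (rule computes_spf_run)
  qed
qed

end
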